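(* Let $G$ be a $4$-connected simple graph on seven vertices. Then $G$ does not contain $W_6$ as a minor if and only if $G$ has no vertex of degree $6$.
   Context: $W_6$ is the wheel obtained by joining a single new vertex to all vertices of a cycle of length $6$. A minor is obtained by a sequence of edge deletions and edge contractions (parallel edges arising from contractions are reduced to single edges). *)

theory Defs
  imports Main
begin

definition simple_graph :: "'a set \<Rightarrow> 'a set set \<Rightarrow> bool" where
  "simple_graph V E \<longleftrightarrow> finite V \<and> (\<forall>e\<in>E. e \<subseteq> V \<and> card e = 2)"

definition degree :: "'a set set \<Rightarrow> 'a \<Rightarrow> nat" where
  "degree E v = card {e \<in> E. v \<in> e}"

definition graph_connected :: "'a set \<Rightarrow> 'a set set \<Rightarrow> bool" where
  "graph_connected V E \<longleftrightarrow>
     (\<forall>u\<in>V. \<forall>v\<in>V. (u, v) \<in> {(x, y). {x, y} \<in> E}\<^sup>*)"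

definition del_vertices :: "'a set \<Rightarrow> 'a set \<Rightarrow> 'a set set \<Rightarrow> 'a set \<times> 'a set set" where
  "del_vertices S V E = (V - S, {e \<in> E. e \<inter> S = {}})"

definition k_connected :: "nat \<Rightarrow> 'a set \<Rightarrow> 'a set set \<Rightarrow> bool" where
  "k_connected k V E \<longleftrightarrow> card V > k \<and>
     (\<forall>S \<subseteq> V. card S < k \<longrightarrow> graph_connected (V - S) {e \<in> E. e \<inter> S = {}})"

text \<open>One minor operation: deleting an edge, or contracting an edge {u,v}
  (v is merged into u; parallel edges collapse automatically since edges are sets).\<close>
inductive minor_step :: "'a set \<times> 'a set set \<Rightarrow> 'a set \<times> 'a set set \<Rightarrow> bool" where
  del_edge: "e \<in> E \<Longrightarrow> minor_step (V, E) (V, E - {e})"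
| contract: "{u, v} \<in> E \<Longrightarrow> u \<noteq> v \<Longrightarrow>
     minor_step (V, E) (V - {v}, (\<lambda>e. (\<lambda>x. if x = v then u else x) ` e) ` (E - {{u, v}}))"

definition graph_iso :: "'a set \<times> 'a set set \<Rightarrow> 'b set \<times> 'b set set \<Rightarrow> bool" where
  "graph_iso G H \<longleftrightarrow> (\<exists>f. bij_betw f (fst G) (fst H) \<and> (\<lambda>e. f ` e) ` snd G = snd H)"

definition is_minor :: "'b set \<times> 'b set set \<Rightarrow> 'a set \<times> 'a set set \<Rightarrow> bool" where
  "is_minor H G \<longleftrightarrow> (\<exists>G'. minor_step\<^sup>*\<^sup>* G G' \<and> graph_iso G' H)"

definition W6 :: "nat set \<times> nat set set" where
  "W6 = ({0..6}, {{i, (i + 1) mod 6} | i. i < 6} \<union> {{i, 6} | i. i < 6})"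

end

theory Submission
  imports Defs
begin

text \<open>If some vertex \<open>h\<close> has degree 6, it is adjacent to all other vertices. By
  4-connectivity every vertex has degree at least 4, hence at least 3 in \<open>G - h\<close>; so the
  six-vertex graph \<open>G - h\<close> satisfies Ore's condition and has a Hamiltonian cycle, which
  together with \<open>h\<close> spans a copy of \<open>W\<^sub>6\<close>. Conversely, contractions lose vertices, so a
  \<open>W\<^sub>6\<close> minor of a seven-vertex graph is obtained by edge deletions alone, and its hub has
  degree 6 in \<open>G\<close>.

  Ore's theorem is proved by Palmer's argument: if consecutive vertices \<open>v\<^sub>0, v\<^sub>1\<close> of a
  cyclic ordering are non-adjacent, then \<open>deg v\<^sub>0 + deg v\<^sub>1 \<ge> n\<close> yields, by pigeonhole, an
  index \<open>j\<close> with \<open>v\<^sub>0 ~ v\<^sub>j\<close> and \<open>v\<^sub>1 ~ v\<^bsub>j+1\<^esub>\<close>; reversing the segment \<open>v\<^sub>1 \<dots> v\<^sub>j\<close>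
  strictly decreases the number of non-adjacent consecutive pairs.\<close>

definition neighbours :: "'a set \<Rightarrow> 'a set set \<Rightarrow> 'a \<Rightarrow> 'a set" where
  "neighbours V E v = {u \<in> V. {v, u} \<in> E}"

lemma degree_eq_card_neighbours:
  assumes "simple_graph V E"
  shows "degree E v = card (neighbours V E v)"
proof -
  have "bij_betw (\<lambda>u. {v, u}) (neighbours V E v) {e \<in> E. v \<in> e}"
  proof (rule bij_betw_imageI)
    show "inj_on (\<lambda>u. {v, u}) (neighbours V E v)"
      by (auto intro!: inj_onI simp: doubleton_eq_iff)
    show "(\<lambda>u. {v, u}) ` neighbours V E v = {e \<in> E. v \<in> e}"
    proof (intro equalityI subsetI)
      fix e assume e: "e \<in> {e \<in> E. v \<in> e}"
      with assms obtain x y where "e = {x, y}" "e \<subseteq> V"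
        by (auto simp: simple_graph_def card_2_iff)
      with e show "e \<in> (\<lambda>u. {v, u}) ` neighbours V E v"
        by (auto simp: neighbours_def insert_commute)
    qed (auto simp: neighbours_def)
  qed
  then show ?thesis
    by (simp add: degree_def bij_betw_same_card)
qed

lemma neighbours_subset:
  assumes "simple_graph V E"
  shows "neighbours V E v \<subseteq> V - {v}"
  using assms by (auto simp: simple_graph_def neighbours_def)

lemma card_neighbours_le:
  assumes "simple_graph V E" "v \<in> V"
  shows "card (neighbours V E v) \<le> card V - 1"
proof -
  have "finite V"
    using assms(1) by (simp add: simple_graph_def)
  then have "card (neighbours V E v) \<le> card (V - {v})"
    using neighbours_subset[OF assms(1)] by (simp add: card_mono)
  with assms(2) \<open>finite V\<close> show ?thesis
    by simp
qed

lemma k_connected_min_degree: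
  assumes sg: "simple_graph V E" and kc: "k_connected k V E" and "v \<in> V"
  shows "k \<le> card (neighbours V E v)"
proof (rule ccontr)
  let ?S = "neighbours V E v"
  assume "\<not> k \<le> card ?S"
  then have "card ?S < k" by simp
  then have conn: "graph_connected (V - ?S) {e \<in> E. e \<inter> ?S = {}}"
    using kc by (auto simp: k_connected_def neighbours_def)
  have "finite V"
    using sg by (simp add: simple_graph_def)
  have "card (insert v ?S) \<le> Suc (card ?S)"
    by (rule card_insert_le_m1) simp_all
  also have "\<dots> < card V"
    using kc \<open>card ?S < k\<close> by (simp add: k_connected_def)
  finally have "\<not> V \<subseteq> insert v ?S"
    using \<open>finite V\<close> card_mono[of "insert v ?S" V] by (auto simp: neighbours_def)
  then obtain u where u: "u \<in> V" "u \<notin> insert v ?S"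
    by blast
  have "v \<in> V - ?S" "u \<in> V - ?S"
    using \<open>v \<in> V\<close> u neighbours_subset[OF sg] by auto
  with conn have "(v, u) \<in> {(x, y). {x, y} \<in> {e \<in> E. e \<inter> ?S = {}}}\<^sup>*"
    by (simp add: graph_connected_def)
  \<comment> \<open>the first edge of a path from \<open>v\<close> avoiding its neighbourhood leads to a non-neighbour\<close>
  then obtain q where "{v, q} \<in> E" "{v, q} \<inter> ?S = {}"
    using u(2) by (cases rule: converse_rtranclE) auto
  moreover from this have "q \<in> ?S"
    using sg by (auto simp: simple_graph_def neighbours_def)
  ultimately show False
    by blast
qed

section \<open>Ore's theorem\<close>

fun non_edges :: "'a set set \<Rightarrow> 'a list \<Rightarrow> nat" where
  "non_edges E (x # y # zs) = of_bool ({x, y} \<notin> E) + non_edges E (y # zs)"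
| "non_edges E _ = 0"

definition cyclic_non_edges :: "'a set set \<Rightarrow> 'a list \<Rightarrow> nat" where
  "cyclic_non_edges E xs = non_edges E (xs @ [hd xs])"

definition hamiltonian_cycle :: "'a set \<Rightarrow> 'a set set \<Rightarrow> 'a list \<Rightarrow> bool" where
  "hamiltonian_cycle V E xs \<longleftrightarrow> distinct xs \<and> set xs = V \<and> cyclic_non_edges E xs = 0"

lemma non_edges_append:
  assumes "xs \<noteq> []" "ys \<noteq> []"
  shows "non_edges E (xs @ ys) = non_edges E xs + of_bool ({last xs, hd ys} \<notin> E) + non_edges E ys"
  using assms by (induction E xs rule: non_edges.induct) (auto simp: neq_Nil_conv)

lemma non_edges_rev: "non_edges E (rev xs) = non_edges E xs"
proof (induction E xs rule: non_edges.induct)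
  case (1 E x y zs)
  have "non_edges E (rev (x # y # zs)) = non_edges E ((rev zs @ [y]) @ [x])"
    by simp
  also have "\<dots> = non_edges E (rev (y # zs)) + of_bool ({y, x} \<notin> E)"
    by (subst non_edges_append) auto
  finally show ?case
    using "1.IH" by (simp add: insert_commute)
qed simp_all

lemma cyclic_non_edges_rotate:
  assumes "xs \<noteq> []" "ys \<noteq> []"
  shows "cyclic_non_edges E (xs @ ys) = cyclic_non_edges E (ys @ xs)"
  using assms by (simp add: cyclic_non_edges_def non_edges_append)

lemma non_edges_pos_split:
  "0 < non_edges E xs \<Longrightarrow> \<exists>ps a b qs. xs = ps @ a # b # qs \<and> {a, b} \<notin> E"
proof (induction E xs rule: non_edges.induct)
  case (1 E x y zs)
  show ?case
  proof (cases "{x, y} \<in> E")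
    case True
    then obtain ps a b qs where "y # zs = ps @ a # b # qs" "{a, b} \<notin> E"
      using "1" by auto
    then show ?thesis
      by (metis append_Cons)
  next
    case False
    then show ?thesis
      by (metis append_Nil)
  qed
qed simp_all

lemma cyclic_non_edges_rotate_to_front:
  assumes "0 < cyclic_non_edges E xs" "2 \<le> length xs"
  obtains a b cs where "{a, b} \<notin> E" "set (a # b # cs) = set xs" "distinct (a # b # cs) = distinct xs"
    "cyclic_non_edges E (a # b # cs) = cyclic_non_edges E xs"
proof -
  obtain ps a b qs where split: "xs @ [hd xs] = ps @ a # b # qs" and ab: "{a, b} \<notin> E"
    using non_edges_pos_split assms(1) unfolding cyclic_non_edges_def by blast
  show ?thesis
  proof (cases "qs = []")
    case True
    with split have xs: "xs = ps @ [a]" and "b = hd xs"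
      by auto
    moreover from xs assms(2) have "ps \<noteq> []"
      by auto
    ultimately obtain cs where "ps = b # cs"
      by (metis hd_append2 list.collapse)
    with xs have "xs = (b # cs) @ [a]"
      by simp
    with that[OF ab, of cs] cyclic_non_edges_rotate[of "b # cs" "[a]" E] show ?thesis
      by auto
  next
    case False
    then obtain rs where "qs = rs @ [hd xs]"
      using split by (cases qs rule: rev_cases) auto
    with split have xs: "xs = ps @ a # b # rs"
      by simp
    show ?thesis
    proof (cases "ps = []")
      case True
      with that[OF ab] xs show ?thesis
        by simp
    next
      case False
      with that[OF ab, of "rs @ ps"] cyclic_non_edges_rotate[of ps "a # b # rs" E] xs show ?thesis
        by auto
    qed
  qed
qed

lemma cyclic_non_edges_reverse_segment:
  assumes "ys \<noteq> []" "{v, hd ys} \<notin> E" "{v, last ys} \<in> E" "{hd ys, w} \<in> E"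
  shows "cyclic_non_edges E (v # rev ys @ w # zs) < cyclic_non_edges E (v # ys @ w # zs)"
proof -
  have "cyclic_non_edges E (v # xs @ w # zs) =
      of_bool ({v, hd xs} \<notin> E) + non_edges E xs + of_bool ({last xs, w} \<notin> E)
      + non_edges E (w # zs @ [v])" if "xs \<noteq> []" for xs
    using that non_edges_append[of "[v]" "xs @ w # zs @ [v]" E] non_edges_append[of xs "w # zs @ [v]" E]
    by (simp add: cyclic_non_edges_def)
  from this[of ys] this[of "rev ys"] assms show ?thesis
    by (simp add: non_edges_rev hd_rev last_rev)
qed

lemma neighbours_insert_self:
  assumes "\<forall>e\<in>E. card e = 2" "V = insert v W"
  shows "neighbours V E v = {x \<in> W. {v, x} \<in> E}"
  using assms by (fastforce simp: neighbours_def)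

lemma card_indices_satisfying:
  "distinct xs \<Longrightarrow> card {i. i < length xs \<and> P (xs ! i)} = card {x \<in> set xs. P x}"
  by (metis distinct_card distinct_filter length_filter_conv_card set_filter)

lemma ore_crossing_edges:
  assumes dist: "distinct (v # u # rs)" and V: "set (v # u # rs) = V"
    and loopfree: "\<forall>e\<in>E. card e = 2" and uv: "{v, u} \<notin> E"
    and ore: "card V \<le> card (neighbours V E v) + card (neighbours V E u)"
  obtains ys w zs where "u # rs = ys @ w # zs" "ys \<noteq> []" "hd ys = u"
    "{v, last ys} \<in> E" "{u, w} \<in> E"
proof -
  \<comment> \<open>\<open>M ! i\<close> is the successor of \<open>L ! i\<close> on the cycle \<open>v # L\<close>\<close>
  define L where "L = u # rs"
  define M where "M = rs @ [v]"
  define A where "A = {i. i < length L \<and> {v, L ! i} \<in> E}"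
  define B where "B = {i. i < length M \<and> {u, M ! i} \<in> E}"
  have "card A = card {x \<in> set L. {v, x} \<in> E}"
    unfolding A_def by (rule card_indices_satisfying) (use dist in \<open>simp add: L_def\<close>)
  also have "\<dots> = card (neighbours V E v)"
    using V neighbours_insert_self[OF loopfree, of V v "set L"] by (simp add: L_def)
  finally have cardA: "card A = card (neighbours V E v)" .
  have "card B = card {x \<in> set M. {u, x} \<in> E}"
    unfolding B_def by (rule card_indices_satisfying) (use dist in \<open>simp add: M_def\<close>)
  also have "\<dots> = card (neighbours V E u)"
  proof -
    have "V = insert u (set M)"
      using V by (auto simp: M_def)
    then show ?thesis
      using neighbours_insert_self[OF loopfree] by metis
  qed
  finally have cardB: "card B = card (neighbours V E u)" .
  have cardV: "card V = Suc (length L)"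
    using dist V by (metis L_def distinct_card length_Cons)
  have "card (A \<union> B) \<le> length L"
    using card_mono[of "{..<length L}" "A \<union> B"] by (auto simp: A_def B_def L_def M_def)
  moreover have "card A + card B = card (A \<union> B) + card (A \<inter> B)"
    by (rule card_Un_Int) (simp_all add: A_def B_def)
  ultimately have "card (A \<inter> B) \<noteq> 0"
    using ore cardA cardB cardV by linarith
  then obtain i where iA: "i \<in> A" and iB: "i \<in> B"
    by (metis card.empty disjoint_iff)
  have "i \<noteq> length rs"
    using iB uv by (auto simp: B_def M_def insert_commute)
  with iB have i: "Suc i < length L"
    by (simp add: B_def M_def L_def)
  have last: "last (take (Suc i) L) = L ! i"
    using i by (simp add: take_Suc_conv_app_nth del: take_Suc_Cons)
  show ?thesis
  proof
    show "u # rs = take (Suc i) L @ L ! Suc i # drop (Suc (Suc i)) L"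
      using i id_take_nth_drop unfolding L_def by blast
    show "hd (take (Suc i) L) = u"
      by (simp add: L_def)
    show "{v, last (take (Suc i) L)} \<in> E"
      using iA last by (simp add: A_def)
    show "{u, L ! Suc i} \<in> E"
      using iB i by (simp add: B_def M_def L_def nth_append)
  qed (simp add: L_def)
qed

theorem ore_hamiltonian_cycle:
  assumes "finite V" "3 \<le> card V" and loopfree: "\<forall>e\<in>E. card e = 2"
    and ore: "\<And>u v. u \<in> V \<Longrightarrow> v \<in> V \<Longrightarrow> u \<noteq> v \<Longrightarrow> {u, v} \<notin> E \<Longrightarrow>
      card V \<le> card (neighbours V E u) + card (neighbours V E v)"
  obtains xs where "hamiltonian_cycle V E xs"
proof -
  obtain xs0 where "distinct xs0 \<and> set xs0 = V"
    using finite_distinct_list[OF \<open>finite V\<close>] by blast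
  then obtain xs where xs: "distinct xs" "set xs = V"
    and least: "\<And>ys. distinct ys \<Longrightarrow> set ys = V \<Longrightarrow> cyclic_non_edges E xs \<le> cyclic_non_edges E ys"
    using ex_has_least_nat[of "\<lambda>ys. distinct ys \<and> set ys = V" xs0 "cyclic_non_edges E"] by blast
  have "cyclic_non_edges E xs = 0"
  proof (rule ccontr)
    assume "cyclic_non_edges E xs \<noteq> 0"
    moreover have "2 \<le> length xs"
      using xs \<open>3 \<le> card V\<close> distinct_card by fastforce
    ultimately obtain a b cs where ab: "{a, b} \<notin> E" and "set (a # b # cs) = set xs"
      "distinct (a # b # cs) = distinct xs" "cyclic_non_edges E (a # b # cs) = cyclic_non_edges E xs"
      using cyclic_non_edges_rotate_to_front by blast
    with xs have abcs: "set (a # b # cs) = V" "distinct (a # b # cs)"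
      "cyclic_non_edges E (a # b # cs) = cyclic_non_edges E xs"
      by (simp_all only:)
    moreover have "card V \<le> card (neighbours V E a) + card (neighbours V E b)"
      using abcs(1,2) by (intro ore ab) auto
    ultimately obtain ys w zs where split: "b # cs = ys @ w # zs" "ys \<noteq> []" "hd ys = b"
      "{a, last ys} \<in> E" "{b, w} \<in> E"
      using ore_crossing_edges[OF _ _ loopfree ab] by blast
    have "cyclic_non_edges E (a # rev ys @ w # zs) < cyclic_non_edges E xs"
      using cyclic_non_edges_reverse_segment[of ys a E w zs] split ab abcs by simp
    moreover have "distinct (a # rev ys @ w # zs)" "set (a # rev ys @ w # zs) = V"
      using abcs(1,2) unfolding split(1) by auto
    ultimately show False
      using least[of "a # rev ys @ w # zs"] by simp
  qed
  with xs that show ?thesis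
    by (simp add: hamiltonian_cycle_def)
qed

section \<open>\<open>W\<^sub>6\<close> minors of seven-vertex graphs\<close>

lemma minor_steps_subgraph:
  assumes "minor_step\<^sup>*\<^sup>* (V, E) (V', E')" "\<forall>e\<in>E. e \<subseteq> V"
  shows "V' \<subseteq> V \<and> (\<forall>e\<in>E'. e \<subseteq> V') \<and> (V' = V \<longrightarrow> E' \<subseteq> E)"
  using assms(1)
proof (induction "(V', E')" arbitrary: V' E' rule: rtranclp_induct)
  case base
  with assms(2) show ?case by simp
next
  case (step G V' E')
  obtain V1 E1 where G: "G = (V1, E1)"
    by fastforce
  from step.hyps(2)[unfolded G] show ?case
  proof cases
    case (del_edge e)
    then show ?thesis
      using step.hyps(3)[OF G] by auto
  next
    case (contract u v)
    note IH = step.hyps(3)[OF G]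
    have uv: "u \<in> V1" "v \<in> V1"
      using contract IH by auto
    have "e \<subseteq> V'" if "e \<in> E'" for e
    proof -
      from that contract obtain e0 where "e0 \<in> E1" "e = (\<lambda>x. if x = v then u else x) ` e0"
        by auto
      with IH contract uv show ?thesis
        by auto
    qed
    moreover have "V' \<noteq> V"
      using contract IH uv by auto
    ultimately show ?thesis
      using contract IH by auto
  qed
qed

lemma minor_steps_delete_edges:
  assumes "finite E" "E' \<subseteq> E"
  shows "minor_step\<^sup>*\<^sup>* (V, E) (V, E')"
proof -
  have "minor_step\<^sup>*\<^sup>* (V, E' \<union> D) (V, E')" if "finite D" for D
    using that
  proof (induction D rule: finite_induct)
    case (insert y D)
    show ?case
    proof (cases "y \<in> E'")
      case True
      with insert.IH show ?thesis
        by (simp add: insert_absorb)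
    next
      case False
      with insert.hyps have "(E' \<union> insert y D) - {y} = E' \<union> D"
        by auto
      with minor_step.del_edge[of y "E' \<union> insert y D" V] insert.IH show ?thesis
        by (metis Un_insert_right converse_rtranclp_into_rtranclp insertI1)
    qed
  qed simp
  from this[of "E - E'"] assms show ?thesis
    by (simp add: Un_absorb1 finite_subset)
qed

lemma W6_edges:
  "snd W6 = {{0,1},{1,2},{2,3},{3,4},{4,5},{5,0},{0,6},{1,6},{2,6},{3,6},{4,6},{5,6}}"
proof -
  have six: "{..<6::nat} = {0,1,2,3,4,5}" by auto
  have "{{i, (i + 1) mod 6} | i::nat. i < 6} = (\<lambda>i. {i, (i + 1) mod 6}) ` {..<6}" by auto
  also have "\<dots> = {{0,1},{1,2},{2,3},{3,4},{4,5},{5,0}}" unfolding six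
    by (simp only: image_insert image_empty) (simp del: One_nat_def add_2_eq_Suc add_2_eq_Suc')
  finally have rim: "{{i, (i + 1) mod 6} | i::nat. i < 6} = {{0,1},{1,2},{2,3},{3,4},{4,5},{5,0}}" .
  have "{{i, 6} | i::nat. i < 6} = (\<lambda>i. {i, 6}) ` {..<6}" by auto
  also have "\<dots> = {{0,6},{1,6},{2,6},{3,6},{4,6},{5,6}}" unfolding six
    by (simp only: image_insert image_empty)
  finally have spokes: "{{i, 6} | i::nat. i < 6} = {{0,6},{1,6},{2,6},{3,6},{4,6},{5,6}}" .
  show ?thesis unfolding W6_def snd_conv rim spokes by (simp only: Un_insert_left Un_empty_left)
qed

lemma W6_minor_if_hamiltonian_cycle_with_hub:
  assumes sg: "simple_graph V E" and ham: "hamiltonian_cycle (V - {h}) E xs" and "length xs = 6"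
    and "h \<in> V" and spokes: "\<And>v. v \<in> V - {h} \<Longrightarrow> {v, h} \<in> E"
  shows "is_minor W6 (V, E)"
proof -
  obtain p0 p1 p2 p3 p4 p5 where xs: "xs = [p0, p1, p2, p3, p4, p5]"
    using \<open>length xs = 6\<close> by (auto simp: numeral_eq_Suc length_Suc_conv)
  have d: "distinct [h, p0, p1, p2, p3, p4, p5]" and V: "V = {h, p0, p1, p2, p3, p4, p5}"
    using ham \<open>h \<in> V\<close> by (auto simp: hamiltonian_cycle_def xs)
  have rim: "{p0,p1} \<in> E" "{p1,p2} \<in> E" "{p2,p3} \<in> E" "{p3,p4} \<in> E" "{p4,p5} \<in> E" "{p5,p0} \<in> E"
    using ham by (simp_all add: hamiltonian_cycle_def cyclic_non_edges_def xs)
  have sp: "{p0,h} \<in> E" "{p1,h} \<in> E" "{p2,h} \<in> E" "{p3,h} \<in> E" "{p4,h} \<in> E" "{p5,h} \<in> E"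
    using spokes d V by auto
  define E' where "E' = {{p0,p1},{p1,p2},{p2,p3},{p3,p4},{p4,p5},{p5,p0},{p0,h},{p1,h},{p2,h},{p3,h},{p4,h},{p5,h}}"
  have "finite E"
    using sg by (meson finite_Pow_iff finite_subset simple_graph_def subsetI PowI)
  then have steps: "minor_step\<^sup>*\<^sup>* (V, E) (V, E')"
    by (rule minor_steps_delete_edges) (use rim sp in \<open>auto simp: E'_def\<close>)
  define f where "f x = (if x = h then 6 else if x = p0 then 0 else if x = p1 then 1 else
     if x = p2 then 2 else if x = p3 then 3 else if x = p4 then 4 else (5::nat))" for x
  have fv: "f h = 6" "f p0 = 0" "f p1 = 1" "f p2 = 2" "f p3 = 3" "f p4 = 4" "f p5 = 5"
    using d by (auto simp: f_def)
  have "inj_on f V" unfolding V using d by (auto simp: inj_on_def fv)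
  moreover have "f ` V = {0..6}"
  proof -
    have "{0..6::nat} = {6,0,1,2,3,4,5}" by auto
    thus ?thesis unfolding V by (simp only: image_insert image_empty fv)
  qed
  ultimately have "bij_betw f V (fst W6)"
    by (simp add: bij_betw_def W6_def)
  moreover have "(\<lambda>e. f ` e) ` E' = snd W6"
    unfolding W6_edges E'_def by (simp only: image_insert image_empty fv)
  ultimately have "graph_iso (V, E') W6"
    unfolding graph_iso_def by auto
  with steps show ?thesis
    by (auto simp: is_minor_def)
qed

lemma degree_6_if_W6_minor:
  assumes sg: "simple_graph V E" and c7: "card V = 7" and "is_minor W6 (V, E)"
  obtains h where "h \<in> V" "degree E h = 6"
proof -
  obtain V' E' f where steps: "minor_step\<^sup>*\<^sup>* (V, E) (V', E')"
    and f: "bij_betw f V' {0..6}" and fE: "(\<lambda>e. f ` e) ` E' = snd W6"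
    using assms(3) by (auto simp: is_minor_def graph_iso_def W6_def)
  have "finite V" "\<forall>e\<in>E. e \<subseteq> V"
    using sg by (simp_all add: simple_graph_def)
  then have sub: "V' \<subseteq> V" "\<forall>e\<in>E'. e \<subseteq> V'" "V' = V \<longrightarrow> E' \<subseteq> E"
    using minor_steps_subgraph[OF steps] by auto
  have "card V' = 7"
    using bij_betw_same_card[OF f] by simp
  with sub(1) c7 \<open>finite V\<close> have V': "V' = V"
    by (metis card_subset_eq)
  define g where "g = inv_into V f"
  have g: "bij_betw g {0..6} V"
    unfolding g_def using f V' by (simp add: bij_betw_inv_into)
  have "{g 6, g i} \<in> E" if "i < 6" for i
  proof -
    have "{i, 6} \<in> (\<lambda>e. f ` e) ` E'"
      using fE that by (auto simp: W6_def)
    then obtain e where e: "e \<in> E'" "f ` e = {i, 6}"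
      by auto
    have "g ` f ` e = e"
      unfolding g_def using e(1) sub(2) V' f by (simp add: bij_betw_def)
    with e have "e = {g 6, g i}"
      by (auto simp: insert_commute)
    with e(1) sub(3) V' show ?thesis
      by auto
  qed
  then have "g ` {0..<6} \<subseteq> neighbours V E (g 6)"
    using g by (auto simp: neighbours_def bij_betw_def)
  moreover have "card (g ` {0..<6}) = 6"
  proof -
    have "inj_on g {0..<6}"
      by (rule inj_on_subset[of g "{0..6}"]) (use g in \<open>auto simp: bij_betw_def\<close>)
    then show ?thesis
      by (simp add: card_image)
  qed
  moreover have fin: "finite (neighbours V E (g 6))"
    using \<open>finite V\<close> by (simp add: neighbours_def)
  ultimately have "6 \<le> card (neighbours V E (g 6))"
    by (metis card_mono)
  moreover have "g 6 \<in> V"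
    using g by (auto simp: bij_betw_def)
  moreover from this have "card (neighbours V E (g 6)) \<le> 6"
    using card_neighbours_le[OF sg] c7 by fastforce
  ultimately show ?thesis
    using that degree_eq_card_neighbours[OF sg] by simp
qed

lemma W6_minor_if_degree_6:
  assumes sg: "simple_graph V E" and c7: "card V = 7" and kc: "k_connected 4 V E"
    and "h \<in> V" and "degree E h = 6"
  shows "is_minor W6 (V, E)"
proof -
  have "finite V" and loopfree: "\<forall>e\<in>E. card e = 2"
    using sg by (simp_all add: simple_graph_def)
  have card_rest: "card (V - {h}) = 6"
    using c7 \<open>h \<in> V\<close> \<open>finite V\<close> by simp
  have hub: "neighbours V E h = V - {h}"
    using neighbours_subset[OF sg] card_rest \<open>degree E h = 6\<close> \<open>finite V\<close>
    by (intro card_seteq) (simp_all add: degree_eq_card_neighbours[OF sg])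
  have spokes: "{v, h} \<in> E" if "v \<in> V - {h}" for v
  proof -
    have "v \<in> neighbours V E h"
      using hub that by simp
    then show ?thesis
      by (simp add: neighbours_def insert_commute)
  qed
  have min_degree: "3 \<le> card (neighbours (V - {h}) E v)" if "v \<in> V - {h}" for v
  proof -
    have "neighbours (V - {h}) E v = neighbours V E v - {h}"
      by (auto simp: neighbours_def)
    moreover have "h \<in> neighbours V E v"
      using spokes[OF that] \<open>h \<in> V\<close> by (simp add: neighbours_def insert_commute)
    moreover have "4 \<le> card (neighbours V E v)"
      using k_connected_min_degree[OF sg kc] that by simp
    ultimately show ?thesis
      by (simp add: card_Diff_singleton)
  qed
  have "card (V - {h}) \<le> card (neighbours (V - {h}) E u) + card (neighbours (V - {h}) E v)"
    if "u \<in> V - {h}" "v \<in> V - {h}" for u v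
    using min_degree[OF that(1)] min_degree[OF that(2)] card_rest by linarith
  moreover have "finite (V - {h})" "3 \<le> card (V - {h})"
    using \<open>finite V\<close> card_rest by simp_all
  ultimately obtain xs where ham: "hamiltonian_cycle (V - {h}) E xs"
    using ore_hamiltonian_cycle[OF _ _ loopfree] by blast
  then have "length xs = 6"
    using card_rest distinct_card by (metis hamiltonian_cycle_def)
  then show ?thesis
    using W6_minor_if_hamiltonian_cycle_with_hub[OF sg ham _ \<open>h \<in> V\<close> spokes] by blast
qed

theorem lemma4p4:
  fixes V :: "'a set" and E :: "'a set set"
  assumes "simple_graph V E" and "card V = 7" and "k_connected 4 V E"
  shows "\<not> is_minor W6 (V, E) \<longleftrightarrow> (\<forall>v\<in>V. degree E v \<noteq> 6)"
proof
  assume "\<not> is_minor W6 (V, E)"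
  then show "\<forall>v\<in>V. degree E v \<noteq> 6"
    using W6_minor_if_degree_6[OF assms] by blast
next
  assume "\<forall>v\<in>V. degree E v \<noteq> 6"
  then show "\<not> is_minor W6 (V, E)"
    using degree_6_if_W6_minor[OF assms(1,2)] by blast
qed

end
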